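(* For all integers $a,b\ge2$, the first Poisson cohomology $HP^1(\Lambda(a,b))$ (Poisson derivations modulo Hamiltonian derivations $\{\lambda,-\}$) is $2$-dimensional with basis the classes of $d_{1,0}$ and $d'_{0,1}$, where $d_{1,0}$ is the derivation with $d_{1,0}(X)=X$, $d_{1,0}(Y)=0$ and $d'_{0,1}$ is the derivation with $d'_{0,1}(X)=0$, $d'_{0,1}(Y)=Y$.
   Context: For integers $a,b\geq 2$, $\Lambda(a,b):=\mathbb C[X,Y]/(X^a,Y^b)$ with basis $X^iY^j$ ($0\le i\le a-1$, $0\le j\le b-1$) and Poisson bracket determined by $\{X,Y\}=XY$ (a skew-symmetric biderivation); equivalently $\{X^iY^j,X\}=-jX^{i+1}Y^j$, $\{X^iY^j,Y\}=iX^iY^{j+1}$. A Poisson derivation is a $\mathbb C$-linear derivation $d$ of $\Lambda(a,b)$ with $d\{f,g\}=\{df,g\}+\{f,dg\}$ for all $f,g$; Hamiltonian derivations are those of the form $\{\lambda,-\}$. $HP^1(\Lambda(a,b))$ is the quotient of Poisson derivations by Hamiltonian ones. *)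

theory Defs
  imports Complex_Main
begin

text \<open>Elements of Lambda(a,b) = C[X,Y]/(X^a,Y^b) are represented by their coefficient
  functions f :: nat \<times> nat \<Rightarrow> complex, where f (i,j) is the coefficient of X^i Y^j;
  the carrier consists of those functions vanishing outside {0..<a} \<times> {0..<b}.\<close>

type_synonym elt = "nat \<times> nat \<Rightarrow> complex"

definition Lam :: "nat \<Rightarrow> nat \<Rightarrow> elt set" where
  "Lam a b = {f. \<forall>i j. (a \<le> i \<or> b \<le> j) \<longrightarrow> f (i, j) = 0}"

definition lmult :: "nat \<Rightarrow> nat \<Rightarrow> elt \<Rightarrow> elt \<Rightarrow> elt" where
  "lmult a b f g = (\<lambda>(m, n). if m < a \<and> n < b then
      (\<Sum>i\<le>m. \<Sum>j\<le>n. f (i, j) * g (m - i, n - j)) else 0)"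

text \<open>Poisson bracket: bilinear extension of
  {X^i Y^j, X^k Y^l} = (i l - j k) X^(i+k) Y^(j+l), i.e. the biderivation with {X,Y} = XY.\<close>
definition lbr :: "nat \<Rightarrow> nat \<Rightarrow> elt \<Rightarrow> elt \<Rightarrow> elt" where
  "lbr a b f g = (\<lambda>(m, n). if m < a \<and> n < b then
      (\<Sum>i\<le>m. \<Sum>j\<le>n. (of_nat i * of_nat (n - j) - of_nat j * of_nat (m - i))
                          * f (i, j) * g (m - i, n - j)) else 0)"

definition Xel :: elt where "Xel = (\<lambda>p. if p = (1, 0) then 1 else 0)"
definition Yel :: elt where "Yel = (\<lambda>p. if p = (0, 1) then 1 else 0)"

definition is_linear_map :: "nat \<Rightarrow> nat \<Rightarrow> (elt \<Rightarrow> elt) \<Rightarrow> bool" where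
  "is_linear_map a b D \<longleftrightarrow>
     (\<forall>f\<in>Lam a b. D f \<in> Lam a b) \<and>
     (\<forall>f\<in>Lam a b. \<forall>g\<in>Lam a b. D (\<lambda>p. f p + g p) = (\<lambda>p. D f p + D g p)) \<and>
     (\<forall>c::complex. \<forall>f\<in>Lam a b. D (\<lambda>p. c * f p) = (\<lambda>p. c * D f p))"

definition is_derivation :: "nat \<Rightarrow> nat \<Rightarrow> (elt \<Rightarrow> elt) \<Rightarrow> bool" where
  "is_derivation a b D \<longleftrightarrow> is_linear_map a b D \<and>
     (\<forall>f\<in>Lam a b. \<forall>g\<in>Lam a b. D (lmult a b f g) = (\<lambda>p. lmult a b (D f) g p + lmult a b f (D g) p))"

definition is_poisson_derivation :: "nat \<Rightarrow> nat \<Rightarrow> (elt \<Rightarrow> elt) \<Rightarrow> bool" where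
  "is_poisson_derivation a b D \<longleftrightarrow> is_derivation a b D \<and>
     (\<forall>f\<in>Lam a b. \<forall>g\<in>Lam a b. D (lbr a b f g) = (\<lambda>p. lbr a b (D f) g p + lbr a b f (D g) p))"

definition d10 :: "elt \<Rightarrow> elt" where "d10 f = (\<lambda>(i, j). of_nat i * f (i, j))"
definition d01 :: "elt \<Rightarrow> elt" where "d01 f = (\<lambda>(i, j). of_nat j * f (i, j))"

end

theory Submission
  imports Defs "HOL-Computational_Algebra.Formal_Power_Series"
begin

(* Lambda(a,b) is the truncation of the algebra of bivariate formal power series
   C[[X,Y]] (realised as complex fps fps, outer variable Y) modulo X^a and Y^b.  On C[[X,Y]]
   the Euler operators X d/dX and Y d/dY are commuting derivations and the bracket
   {F,G} = (X d/dX F)(Y d/dY G) - (Y d/dY F)(X d/dX G) is a Poisson bracket with {X,Y} = XY.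
   Truncation commutes with all these operations, so the product and bracket of Lambda(a,b) are
   truncated series operations; this transports Leibniz and Jacobi identities and shows that
   d10, d01 and every Hamiltonian {l,-} are Poisson derivations of Lambda(a,b).

   For the classification, a derivation is determined by its values u = D X and v = D Y.
   The relations X^a = 0 and Y^b = 0 force u to have no pure-Y part and v no pure-X part,
   and applying D to {X,Y} = XY gives m u(m+1,n) + n v(m,n+1) = 0.  From these constraints
   we write down an explicit potential l with D = u(1,0) d10 + v(0,1) d01 + {l,-}.  Finally
   d10 and d01 are independent modulo Hamiltonians because {l,X} and {l,Y} never contain the
   monomials X resp. Y. *)

unbundle fps_syntax


section \<open>The Euler operator on formal power series\<close>

definition euler :: "'a::comm_ring_1 fps \<Rightarrow> 'a fps" where
  "euler F = Abs_fps (\<lambda>n. of_nat n * F $ n)"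

lemma euler_nth [simp]: "euler F $ n = of_nat n * F $ n"
  by (simp add: euler_def)

lemma euler_add [simp]: "euler (F + G) = euler F + euler G"
  by (rule fps_ext) (simp add: algebra_simps)

lemma euler_diff [simp]: "euler (F - G) = euler F - euler G"
  by (rule fps_ext) (simp add: algebra_simps)

lemma euler_sum: "euler (sum f S) = (\<Sum>x\<in>S. euler (f x))"
  by (rule fps_ext) (simp add: fps_sum_nth sum_distrib_left)

lemma euler_mult [simp]: "euler (F * G) = euler F * G + F * euler G"
proof (rule fps_ext)
  fix n
  have "euler (F * G) $ n = (\<Sum>i=0..n. (of_nat i + of_nat (n - i)) * (F $ i * G $ (n - i)))"
    by (simp add: fps_mult_nth sum_distrib_left flip: of_nat_add)
  also have "\<dots> = (\<Sum>i=0..n. of_nat i * F $ i * G $ (n - i))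
                  + (\<Sum>i=0..n. F $ i * (of_nat (n - i) * G $ (n - i)))"
    by (simp add: sum.distrib[symmetric] algebra_simps)
  also have "\<dots> = (euler F * G + F * euler G) $ n"
    by (simp add: fps_mult_nth)
  finally show "euler (F * G) $ n = (euler F * G + F * euler G) $ n" .
qed

lemma euler_const [simp]: "euler (fps_const c) = 0"
  by (rule fps_ext) simp

lemma euler_zero [simp]: "euler 0 = 0"
  by (rule fps_ext) simp

lemma euler_of_nat_mult: "euler (of_nat k * F) = of_nat k * euler F"
  by (rule fps_ext) (simp add: algebra_simps flip: fps_of_nat)


section \<open>Bivariate power series and their Poisson bracket\<close>

text \<open>F $ j $ i is the coefficient of X^i Y^j.\<close>
type_synonym series2 = "complex fps fps"

definition xS :: series2 where "xS = fps_const fps_X"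
definition yS :: series2 where "yS = fps_X"

definition eulerX :: "series2 \<Rightarrow> series2" where "eulerX F = Abs_fps (\<lambda>j. euler (F $ j))"
abbreviation eulerY :: "series2 \<Rightarrow> series2" where "eulerY \<equiv> euler"

lemma eulerX_nth [simp]: "eulerX F $ j = euler (F $ j)"
  by (simp add: eulerX_def)

lemma eulerX_add [simp]: "eulerX (F + G) = eulerX F + eulerX G"
  by (rule fps_ext) simp

lemma eulerX_diff [simp]: "eulerX (F - G) = eulerX F - eulerX G"
  by (rule fps_ext) simp

lemma eulerX_mult [simp]: "eulerX (F * G) = eulerX F * G + F * eulerX G"
  by (rule fps_ext) (simp add: fps_mult_nth euler_sum sum.distrib)

lemma eulerX_const [simp]: "eulerX (fps_const (fps_const c)) = 0"
  by (rule fps_ext) simp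

text \<open>The Euler operators commute, which makes each of them a derivation of the bracket.\<close>
lemma eulerX_eulerY [simp]: "eulerY (eulerX F) = eulerX (eulerY F)"
  by (rule fps_ext) (simp add: euler_of_nat_mult flip: fps_of_nat)

lemma eulerX_xS [simp]: "eulerX xS = xS" and eulerY_xS [simp]: "eulerY xS = 0"
  and eulerX_yS [simp]: "eulerX yS = 0" and eulerY_yS [simp]: "eulerY yS = yS"
  by (rule fps_ext, rule fps_ext, simp add: xS_def yS_def)+

text \<open>The log-canonical Poisson bracket, characterised by {X,Y} = XY.\<close>
definition pbr :: "series2 \<Rightarrow> series2 \<Rightarrow> series2" where
  "pbr F G = eulerX F * eulerY G - eulerY F * eulerX G"

lemma pbr_add_right: "pbr F (G + H) = pbr F G + pbr F H"
  by (simp add: pbr_def algebra_simps)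

lemma pbr_scale_right [simp]:
  "pbr F (fps_const (fps_const c) * G) = fps_const (fps_const c) * pbr F G"
  by (simp add: pbr_def algebra_simps)

lemma pbr_mult_right: "pbr F (G * H) = pbr F G * H + G * pbr F H"
  by (simp add: pbr_def algebra_simps)

lemma pbr_jacobi: "pbr F (pbr G H) = pbr (pbr F G) H + pbr G (pbr F H)"
  by (simp add: pbr_def algebra_simps)

lemma eulerX_pbr: "eulerX (pbr F G) = pbr (eulerX F) G + pbr F (eulerX G)"
  by (simp add: pbr_def algebra_simps)

lemma eulerY_pbr: "eulerY (pbr F G) = pbr (eulerY F) G + pbr F (eulerY G)"
  by (simp add: pbr_def algebra_simps)

lemma mult_nth2: "(F * G) $ n $ m = (\<Sum>j\<le>n. \<Sum>i\<le>m. F $ j $ i * G $ (n - j) $ (m - i))"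
  by (simp add: fps_mult_nth fps_sum_nth atLeast0AtMost)

lemma pbr_nth2: "pbr F G $ n $ m = (\<Sum>j\<le>n. \<Sum>i\<le>m.
   (of_nat i * of_nat (n - j) - of_nat j * of_nat (m - i)) * F $ j $ i * G $ (n - j) $ (m - i))"
  unfolding pbr_def fps_sub_nth mult_nth2
  by (simp add: sum_subtractf[symmetric] algebra_simps)

lemma xS_pow_mult_nth: "(xS ^ k * F) $ n $ m = (if m < k then 0 else F $ n $ (m - k))"
  by (simp add: xS_def fps_const_power fps_X_power_mult_nth)

lemma xS_mult_nth: "(xS * F) $ n $ m = (if m = 0 then 0 else F $ n $ (m - 1))"
  using xS_pow_mult_nth[of 1 F n m] by auto

lemma mult_yS_nth: "(F * yS) $ n $ m = (if n = 0 then 0 else F $ (n - 1) $ m)"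
  using fps_X_power_mult_right_nth[of F 1 n] by (simp add: yS_def)

lemma monomial_nth: "(xS ^ i * yS ^ j) $ n $ m = (if m = i \<and> n = j then 1 else 0)"
  by (simp add: xS_def yS_def fps_const_power fps_X_power_mult_right_nth)


section \<open>Lambda(a,b) as truncated power series\<close>

definition lift :: "elt \<Rightarrow> series2" where
  "lift f = Abs_fps (\<lambda>j. Abs_fps (\<lambda>i. f (i, j)))"

definition trunc :: "nat \<Rightarrow> nat \<Rightarrow> series2 \<Rightarrow> elt" where
  "trunc a b F = (\<lambda>(m, n). if m < a \<and> n < b then F $ n $ m else 0)"

lemma lift_nth [simp]: "lift f $ j $ i = f (i, j)"
  by (simp add: lift_def)

lemma lift_add: "lift (\<lambda>p. f p + g p) = lift f + lift g"
  by (rule fps_ext, rule fps_ext) simp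

lemma lift_scale: "lift (\<lambda>p. c * f p) = fps_const (fps_const c) * lift f"
  by (rule fps_ext, rule fps_ext) simp

lemma lift_Xel: "lift Xel = xS" and lift_Yel: "lift Yel = yS"
  by (rule fps_ext, rule fps_ext, auto simp: Xel_def Yel_def xS_def yS_def)+

lemma lmult_trunc: "lmult a b f g = trunc a b (lift f * lift g)"
  unfolding lmult_def trunc_def
  by (rule ext) (auto simp: mult_nth2 intro: sum.swap)

lemma lbr_trunc: "lbr a b f g = trunc a b (pbr (lift f) (lift g))"
  unfolding lbr_def trunc_def
  by (rule ext) (auto simp: pbr_nth2 intro: sum.swap)

lemma trunc_Lam [simp]: "trunc a b F \<in> Lam a b"
  by (auto simp: trunc_def Lam_def)

lemma trunc_lift: "f \<in> Lam a b \<Longrightarrow> trunc a b (lift f) = f"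
  by (rule ext) (auto simp: trunc_def Lam_def)

lemma trunc_eq_iff: "trunc a b F = trunc a b G \<longleftrightarrow> (\<forall>i<a. \<forall>j<b. F $ j $ i = G $ j $ i)"
  unfolding trunc_def fun_eq_iff by force

lemma trunc_add: "trunc a b (F + G) = (\<lambda>p. trunc a b F p + trunc a b G p)"
  by (rule ext) (auto simp: trunc_def)

lemma trunc_scale: "trunc a b (fps_const (fps_const c) * F) = (\<lambda>p. c * trunc a b F p)"
  by (rule ext) (auto simp: trunc_def)

lemma trunc_lift_trunc: "trunc a b (lift (trunc a b F)) = trunc a b F"
  unfolding trunc_eq_iff by (simp add: trunc_def)

lemma trunc_diff: "trunc a b (F - G) = (\<lambda>p. trunc a b F p - trunc a b G p)"
  by (rule ext) (auto simp: trunc_def)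

text \<open>Series with the same truncation have products, Euler derivatives and brackets with
  the same truncation: the kernel of truncation is a Poisson ideal stable under the Euler
  operators.\<close>
lemma trunc_cong_mult_left: "trunc a b F = trunc a b F' \<Longrightarrow> trunc a b (F * G) = trunc a b (F' * G)"
  unfolding trunc_eq_iff by (auto simp: mult_nth2 intro!: sum.cong)

lemma trunc_cong_mult_right: "trunc a b G = trunc a b G' \<Longrightarrow> trunc a b (F * G) = trunc a b (F * G')"
  using trunc_cong_mult_left[of a b G G' F] by (simp add: mult.commute)

lemma trunc_cong_eulerX: "trunc a b F = trunc a b F' \<Longrightarrow> trunc a b (eulerX F) = trunc a b (eulerX F')"
  unfolding trunc_eq_iff by auto

lemma trunc_cong_eulerY: "trunc a b F = trunc a b F' \<Longrightarrow> trunc a b (eulerY F) = trunc a b (eulerY F')"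
  unfolding trunc_eq_iff by auto

lemma trunc_cong_pbr_left: "trunc a b F = trunc a b F' \<Longrightarrow> trunc a b (pbr F G) = trunc a b (pbr F' G)"
  unfolding pbr_def trunc_diff
  by (metis trunc_cong_mult_left trunc_cong_eulerX trunc_cong_eulerY)

lemma trunc_cong_pbr_right: "trunc a b G = trunc a b G' \<Longrightarrow> trunc a b (pbr F G) = trunc a b (pbr F G')"
  unfolding pbr_def trunc_diff
  by (metis trunc_cong_mult_right trunc_cong_eulerX trunc_cong_eulerY)


section \<open>Poisson derivations induced by series operators\<close>

lemma poisson_derivation_from_series:
  assumes D: "\<And>f. f \<in> Lam a b \<Longrightarrow> D f = trunc a b (E (lift f))"
    and add: "\<And>F G. E (F + G) = E F + E G"
    and scale: "\<And>c F. E (fps_const (fps_const c) * F) = fps_const (fps_const c) * E F"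
    and leibniz: "\<And>F G. E (F * G) = E F * G + F * E G"
    and jacobi: "\<And>F G. E (pbr F G) = pbr (E F) G + pbr F (E G)"
    and cong: "\<And>F F'. trunc a b F = trunc a b F' \<Longrightarrow> trunc a b (E F) = trunc a b (E F')"
  shows "is_poisson_derivation a b D"
  unfolding is_poisson_derivation_def is_derivation_def is_linear_map_def
proof (intro conjI ballI allI)
  fix f g c assume f: "f \<in> Lam a b" and g: "g \<in> Lam a b"
  have D_mult_left: "trunc a b (lift (D h) * G) = trunc a b (E (lift h) * G)"
    and D_mult_right: "trunc a b (G * lift (D h)) = trunc a b (G * E (lift h))"
    and D_pbr_left: "trunc a b (pbr (lift (D h)) G) = trunc a b (pbr (E (lift h)) G)"
    and D_pbr_right: "trunc a b (pbr G (lift (D h))) = trunc a b (pbr G (E (lift h)))"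
    if "h \<in> Lam a b" for h G
    using that D trunc_lift_trunc trunc_cong_mult_left trunc_cong_mult_right
      trunc_cong_pbr_left trunc_cong_pbr_right by metis+
  show "D f \<in> Lam a b" using D f by simp
  have fg: "(\<lambda>p. f p + g p) \<in> Lam a b" using f g by (simp add: Lam_def)
  show "D (\<lambda>p. f p + g p) = (\<lambda>p. D f p + D g p)"
    using D f g fg by (simp add: lift_add add trunc_add)
  have cf: "(\<lambda>p. c * f p) \<in> Lam a b" using f by (simp add: Lam_def)
  show "D (\<lambda>p. c * f p) = (\<lambda>p. c * D f p)"
    using D f cf by (simp add: lift_scale scale trunc_scale)
  have "D (lmult a b f g) = trunc a b (E (lift f * lift g))"
    using D cong[OF trunc_lift_trunc] by (simp add: lmult_trunc)
  also have "\<dots> = (\<lambda>p. lmult a b (D f) g p + lmult a b f (D g) p)"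
    using D_mult_left[OF f] D_mult_right[OF g] by (simp add: leibniz trunc_add lmult_trunc)
  finally show "D (lmult a b f g) = (\<lambda>p. lmult a b (D f) g p + lmult a b f (D g) p)" .
  have "D (lbr a b f g) = trunc a b (E (pbr (lift f) (lift g)))"
    using D cong[OF trunc_lift_trunc] by (simp add: lbr_trunc)
  also have "\<dots> = (\<lambda>p. lbr a b (D f) g p + lbr a b f (D g) p)"
    using D_pbr_left[OF f] D_pbr_right[OF g] by (simp add: jacobi trunc_add lbr_trunc)
  finally show "D (lbr a b f g) = (\<lambda>p. lbr a b (D f) g p + lbr a b f (D g) p)" .
qed

lemma d10_poisson: "is_poisson_derivation a b d10"
proof (rule poisson_derivation_from_series[OF _ eulerX_add _ eulerX_mult eulerX_pbr trunc_cong_eulerX])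
  show "d10 f = trunc a b (eulerX (lift f))" if "f \<in> Lam a b" for f
    using that by (auto simp: d10_def trunc_def Lam_def fun_eq_iff)
qed simp_all

lemma d01_poisson: "is_poisson_derivation a b d01"
proof (rule poisson_derivation_from_series[OF _ euler_add _ euler_mult eulerY_pbr trunc_cong_eulerY])
  show "d01 f = trunc a b (eulerY (lift f))" if "f \<in> Lam a b" for f
    using that by (auto simp: d01_def trunc_def Lam_def fun_eq_iff)
qed simp_all

lemma hamiltonian_poisson: "is_poisson_derivation a b (lbr a b l)"
  by (rule poisson_derivation_from_series[OF _ pbr_add_right pbr_scale_right pbr_mult_right
        pbr_jacobi trunc_cong_pbr_right]) (simp add: lbr_trunc)

lemma d10_Xel: "d10 Xel = Xel" and d10_Yel: "d10 Yel = (\<lambda>_. 0)"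
  and d01_Xel: "d01 Xel = (\<lambda>_. 0)" and d01_Yel: "d01 Yel = Yel"
  by (rule ext, auto simp: d10_def d01_def Xel_def Yel_def split: if_splits)+

text \<open>Explicit Hamiltonian derivatives of the generators:
  {l,X} = -X (Y d/dY l) and {l,Y} = Y (X d/dX l).\<close>
lemma lbr_Xel: "lbr a b l Xel (m, n) =
    (if m < a \<and> n < b then (if m = 0 then 0 else - (of_nat n * l (m - 1, n))) else 0)"
proof -
  have "pbr (lift l) xS = - (xS * eulerY (lift l))" by (simp add: pbr_def mult.commute)
  thus ?thesis by (simp add: lbr_trunc lift_Xel trunc_def xS_mult_nth)
qed

lemma lbr_Yel: "lbr a b l Yel (m, n) =
    (if m < a \<and> n < b then (if n = 0 then 0 else of_nat m * l (m, n - 1)) else 0)"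
proof -
  have "pbr (lift l) yS = eulerX (lift l) * yS" by (simp add: pbr_def)
  thus ?thesis by (simp add: lbr_trunc lift_Yel trunc_def mult_yS_nth)
qed


section \<open>A derivation is determined by its values on X and Y\<close>

lemma Xel_Lam: "2 \<le> a \<Longrightarrow> 0 < b \<Longrightarrow> Xel \<in> Lam a b"
  by (auto simp: Lam_def Xel_def)

lemma Yel_Lam: "0 < a \<Longrightarrow> 2 \<le> b \<Longrightarrow> Yel \<in> Lam a b"
  by (auto simp: Lam_def Yel_def)

definition mon :: "nat \<Rightarrow> nat \<Rightarrow> nat \<times> nat \<Rightarrow> elt" where
  "mon a b q = trunc a b (xS ^ fst q * yS ^ snd q)"

lemma mon_val: "mon a b q (m, n) = (if m < a \<and> n < b \<and> q = (m, n) then 1 else 0)"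
  by (cases q) (auto simp: mon_def trunc_def monomial_nth)

lemma mon_Lam [simp]: "mon a b q \<in> Lam a b"
  by (simp add: mon_def)

lemma Lam_expand:
  assumes f: "f \<in> Lam a b"
  shows "f = (\<lambda>p. \<Sum>q\<in>{..<a}\<times>{..<b}. f q * mon a b q p)"
proof (rule ext)
  fix p :: "nat \<times> nat"
  obtain m n where p: "p = (m, n)" by (cases p)
  show "f p = (\<Sum>q\<in>{..<a}\<times>{..<b}. f q * mon a b q p)"
  proof (cases "m < a \<and> n < b")
    case True
    then show ?thesis unfolding p mon_val
      by (simp add: if_distrib[of "\<lambda>x. f _ * x"] sum.delta' cong: if_cong)
  next
    case False
    then show ?thesis using f unfolding p mon_val by (auto simp: Lam_def)
  qed
qed

lemma linear_map_zero:
  assumes "is_linear_map a b D" shows "D (\<lambda>_. 0) = (\<lambda>_. 0)"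
proof -
  have zero: "(\<lambda>_. 0) \<in> Lam a b" by (simp add: Lam_def)
  have "\<forall>c. \<forall>f\<in>Lam a b. D (\<lambda>p. c * f p) = (\<lambda>p. c * D f p)"
    using assms unfolding is_linear_map_def by blast
  from bspec[OF spec[OF this, of 0] zero] show ?thesis by simp
qed

lemma linear_maps_eq_on_monomials:
  assumes D: "is_linear_map a b D" and G: "is_linear_map a b G"
    and mon: "\<And>q. D (mon a b q) = G (mon a b q)" and f: "f \<in> Lam a b"
  shows "D f = G f"
proof -
  have add: "\<And>H h g. is_linear_map a b H \<Longrightarrow> h \<in> Lam a b \<Longrightarrow> g \<in> Lam a b \<Longrightarrow>
               H (\<lambda>p. h p + g p) = (\<lambda>p. H h p + H g p)"
   and scale: "\<And>H c h. is_linear_map a b H \<Longrightarrow> h \<in> Lam a b \<Longrightarrow> H (\<lambda>p. c * h p) = (\<lambda>p. c * H h p)"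
    unfolding is_linear_map_def by blast+
  have sum_Lam: "(\<lambda>p. \<Sum>q\<in>S. f q * mon a b q p) \<in> Lam a b" for S
    by (auto simp: Lam_def mon_val)
  have term_Lam: "(\<lambda>p. f q * mon a b q p) \<in> Lam a b" for q
    by (auto simp: Lam_def mon_val)
  have "finite S \<Longrightarrow> D (\<lambda>p. \<Sum>q\<in>S. f q * mon a b q p) = G (\<lambda>p. \<Sum>q\<in>S. f q * mon a b q p)" for S
  proof (induction S rule: finite_induct)
    case empty
    show ?case using linear_map_zero[OF D] linear_map_zero[OF G] by simp
  next
    case (insert q S)
    then show ?case
      using add[OF D term_Lam sum_Lam] add[OF G term_Lam sum_Lam]
        scale[OF D mon_Lam] scale[OF G mon_Lam] mon[of q] by simp
  qed
  from this[of "{..<a}\<times>{..<b}"] show ?thesis using Lam_expand[OF f] by simp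
qed

lemma lmult_comm: "lmult a b f g = lmult a b g f"
  by (simp add: lmult_trunc mult.commute)

lemma lmult_one: "h \<in> Lam a b \<Longrightarrow> lmult a b h (trunc a b 1) = h"
  by (simp add: lmult_trunc trunc_cong_mult_right[OF trunc_lift_trunc] trunc_lift)

text \<open>A derivation kills the unit, since D 1 = D (1 * 1) = 2 D 1.\<close>
lemma derivation_one:
  assumes D: "is_derivation a b D" shows "D (trunc a b 1) = (\<lambda>_. 0)"
proof -
  let ?one = "trunc a b (1::series2)"
  have DL: "D ?one \<in> Lam a b"
    and leibniz: "D (lmult a b ?one ?one) = (\<lambda>p. lmult a b (D ?one) ?one p + lmult a b ?one (D ?one) p)"
    using D unfolding is_derivation_def is_linear_map_def by auto
  have "lmult a b ?one ?one = ?one" by (rule lmult_one) simp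
  then have "D ?one = (\<lambda>p. D ?one p + D ?one p)"
    using leibniz lmult_one[OF DL] lmult_comm[of a b ?one "D ?one"] by simp
  then show ?thesis by (simp add: fun_eq_iff)
qed

lemma mon_Suc_X: "mon a b (Suc i, j) = lmult a b Xel (mon a b (i, j))"
  by (simp add: mon_def lmult_trunc lift_Xel trunc_cong_mult_right[OF trunc_lift_trunc] mult.assoc)

lemma mon_Suc_Y: "mon a b (i, Suc j) = lmult a b Yel (mon a b (i, j))"
  by (simp add: mon_def lmult_trunc lift_Yel trunc_cong_mult_right[OF trunc_lift_trunc] mult_ac)

lemma derivations_eq_on_monomials:
  assumes ab: "2 \<le> a" "2 \<le> b" and D: "is_derivation a b D" and G: "is_derivation a b G"
    and X: "D Xel = G Xel" and Y: "D Yel = G Yel"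
  shows "D (mon a b (i, j)) = G (mon a b (i, j))"
proof -
  have leibniz: "\<And>H h g. is_derivation a b H \<Longrightarrow> h \<in> Lam a b \<Longrightarrow> g \<in> Lam a b \<Longrightarrow>
      H (lmult a b h g) = (\<lambda>p. lmult a b (H h) g p + lmult a b h (H g) p)"
    unfolding is_derivation_def by blast
  have XL: "Xel \<in> Lam a b" and YL: "Yel \<in> Lam a b" using ab by (simp_all add: Xel_Lam Yel_Lam)
  have pure_Y: "D (mon a b (0, j)) = G (mon a b (0, j))" for j
  proof (induction j)
    case 0
    have "mon a b (0, 0) = trunc a b 1" by (simp add: mon_def)
    then show ?case using derivation_one[OF D] derivation_one[OF G] by simp
  next
    case (Suc j)
    then show ?case
      using leibniz[OF D YL mon_Lam] leibniz[OF G YL mon_Lam] Y by (simp add: mon_Suc_Y)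
  qed
  show ?thesis
  proof (induction i)
    case 0 then show ?case by (rule pure_Y)
  next
    case (Suc i)
    then show ?case
      using leibniz[OF D XL mon_Lam] leibniz[OF G XL mon_Lam] X by (simp add: mon_Suc_X)
  qed
qed

lemma derivations_eq:
  assumes "2 \<le> a" "2 \<le> b" and D: "is_derivation a b D" and G: "is_derivation a b G"
    and "D Xel = G Xel" "D Yel = G Yel" and "f \<in> Lam a b"
  shows "D f = G f"
proof (rule linear_maps_eq_on_monomials[of a b D G])
  show "is_linear_map a b D" "is_linear_map a b G"
    using D G unfolding is_derivation_def by blast+
  show "D (mon a b q) = G (mon a b q)" for q
    using derivations_eq_on_monomials[OF assms(1-6), of "fst q" "snd q"] by simp
qed fact


section \<open>Constraints on the values of a Poisson derivation on X and Y\<close>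

lemma derivation_power:
  assumes D: "is_derivation a b D" and g: "g \<in> Lam a b"
  shows "D (trunc a b (lift g ^ Suc k)) = (\<lambda>p. of_nat (Suc k) * trunc a b (lift g ^ k * lift (D g)) p)"
proof (induction k)
  case 0
  have "D g \<in> Lam a b" using D g unfolding is_derivation_def is_linear_map_def by blast
  then show ?case using g by (simp add: trunc_lift)
next
  case (Suc k)
  let ?g = "lift g" and ?M = "trunc a b (lift g ^ Suc k)" and ?c = "fps_const (fps_const (of_nat (Suc k)))"
  have power: "trunc a b (?g ^ Suc (Suc k)) = lmult a b g ?M"
    by (simp add: lmult_trunc trunc_cong_mult_right[OF trunc_lift_trunc])
  have leibniz: "D (lmult a b g ?M) = (\<lambda>p. lmult a b (D g) ?M p + lmult a b g (D ?M) p)"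
    using D g unfolding is_derivation_def by simp
  have first: "lmult a b (D g) ?M = trunc a b (?g ^ Suc k * lift (D g))"
    by (simp add: lmult_trunc trunc_cong_mult_right[OF trunc_lift_trunc] mult.commute)
  have "lmult a b g (D ?M) = trunc a b (?g * (?c * lift (trunc a b (?g ^ k * lift (D g)))))"
    unfolding Suc lmult_trunc lift_scale ..
  also have "\<dots> = trunc a b (?c * (?g * lift (trunc a b (?g ^ k * lift (D g)))))"
    by (simp only: mult.left_commute)
  also have "\<dots> = (\<lambda>p. of_nat (Suc k) * trunc a b (?g * (?g ^ k * lift (D g))) p)"
    unfolding trunc_scale trunc_cong_mult_right[OF trunc_lift_trunc] ..
  finally have second: "lmult a b g (D ?M) = (\<lambda>p. of_nat (Suc k) * trunc a b (?g ^ Suc k * lift (D g)) p)"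
    by (simp add: mult.assoc)
  show ?case
    unfolding power leibniz first second by (simp add: fun_eq_iff ring_distribs)
qed

text \<open>Since X^a = 0, the power rule gives a X^(a-1) D X = 0, so D X has no terms Y^j.\<close>
lemma derivation_Xel_no_pure_Y:
  assumes ab: "2 \<le> a" "0 < b" and D: "is_derivation a b D"
  shows "D Xel (0, j) = 0"
proof (cases "j < b")
  case True
  have "trunc a b (xS ^ a) = (\<lambda>_. 0)"
    using monomial_nth[of a 0] by (auto simp: trunc_def fun_eq_iff)
  then have "(\<lambda>p. of_nat a * trunc a b (xS ^ (a - 1) * lift (D Xel)) p) = (\<lambda>_. 0)"
    using derivation_power[OF D Xel_Lam[OF ab], of "a - 1"] linear_map_zero[of a b D] D ab
    by (simp add: lift_Xel is_derivation_def)
  from fun_cong[OF this, of "(a - 1, j)"] True ab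
  show ?thesis by (simp add: trunc_def xS_pow_mult_nth)
next
  case False
  have "D Xel \<in> Lam a b" using D Xel_Lam[OF ab] unfolding is_derivation_def is_linear_map_def by blast
  then show ?thesis using False by (simp add: Lam_def)
qed

text \<open>Symmetrically, Y^b = 0 forces D Y to have no terms X^i.\<close>
lemma derivation_Yel_no_pure_X:
  assumes ab: "0 < a" "2 \<le> b" and D: "is_derivation a b D"
  shows "D Yel (i, 0) = 0"
proof (cases "i < a")
  case True
  have "trunc a b (yS ^ b) = (\<lambda>_. 0)"
    using monomial_nth[of 0 b] by (auto simp: trunc_def fun_eq_iff)
  then have "(\<lambda>p. of_nat b * trunc a b (yS ^ (b - 1) * lift (D Yel)) p) = (\<lambda>_. 0)"
    using derivation_power[OF D Yel_Lam[OF ab], of "b - 1"] linear_map_zero[of a b D] D ab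
    by (simp add: lift_Yel is_derivation_def)
  from fun_cong[OF this, of "(i, b - 1)"] True ab
  show ?thesis by (simp add: trunc_def yS_def fps_X_power_mult_nth)
next
  case False
  have "D Yel \<in> Lam a b" using D Yel_Lam[OF ab] unfolding is_derivation_def is_linear_map_def by blast
  then show ?thesis using False by (simp add: Lam_def)
qed

text \<open>Applying D to {X,Y} = XY: the Leibniz and bracket expansions must coincide, which
  leaves m u(m+1,n) + n v(m,n+1) = 0 for u = D X and v = D Y.\<close>
lemma poisson_relation:
  assumes ab: "2 \<le> a" "2 \<le> b" and D: "is_poisson_derivation a b D"
    and m: "Suc m < a" and n: "Suc n < b"
  shows "of_nat m * D Xel (Suc m, n) + of_nat n * D Yel (m, Suc n) = 0"
proof -
  let ?u = "D Xel" and ?v = "D Yel"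
  have XL: "Xel \<in> Lam a b" and YL: "Yel \<in> Lam a b" using ab by (simp_all add: Xel_Lam Yel_Lam)
  have bracket: "D (lbr a b Xel Yel) = (\<lambda>p. lbr a b ?u Yel p + lbr a b Xel ?v p)"
    using D XL YL unfolding is_poisson_derivation_def by blast
  have leibniz: "D (lmult a b Xel Yel) = (\<lambda>p. lmult a b ?u Yel p + lmult a b Xel ?v p)"
    using D XL YL unfolding is_poisson_derivation_def is_derivation_def by blast
  have XY: "lbr a b Xel Yel = lmult a b Xel Yel"
    by (simp add: lbr_trunc lmult_trunc lift_Xel lift_Yel pbr_def)
  have "lmult a b ?u Yel (Suc m, Suc n) + lmult a b Xel ?v (Suc m, Suc n)
      = lbr a b ?u Yel (Suc m, Suc n) + lbr a b Xel ?v (Suc m, Suc n)"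
    using fun_cong[OF bracket, of "(Suc m, Suc n)"] fun_cong[OF leibniz, of "(Suc m, Suc n)"] XY
    by simp
  moreover have "pbr (lift ?u) yS = eulerX (lift ?u) * yS" by (simp add: pbr_def)
  moreover have "pbr xS (lift ?v) = xS * eulerY (lift ?v)" by (simp add: pbr_def)
  ultimately have "?u (Suc m, n) + ?v (m, Suc n)
      = of_nat (Suc m) * ?u (Suc m, n) + of_nat (Suc n) * ?v (m, Suc n)"
    using m n by (simp add: lmult_trunc lbr_trunc lift_Xel lift_Yel trunc_def xS_mult_nth mult_yS_nth
        del: of_nat_Suc)
  then show ?thesis by (simp add: algebra_simps)
qed


section \<open>The Hamiltonian potential\<close>

text \<open>Given u = D X and v = D Y, the element l with D = u(1,0) d10 + v(0,1) d01 + {l,-}: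
  its coefficients are read off from {l,X} = -X (Y d/dY l), or, where that is impossible,
  from {l,Y} = Y (X d/dX l).\<close>
definition ham_potential :: "nat \<Rightarrow> nat \<Rightarrow> elt \<Rightarrow> elt \<Rightarrow> elt" where
  "ham_potential a b u v = (\<lambda>(i, j). if i < a \<and> j < b then
      (if 1 \<le> j \<and> i + 1 < a then - u (i + 1, j) / of_nat j
       else if 1 \<le> i \<and> j + 1 < b then v (i, j + 1) / of_nat i else 0) else 0)"

lemma ham_potential_Lam: "ham_potential a b u v \<in> Lam a b"
  by (auto simp: Lam_def ham_potential_def)

lemma ham_potential_Xel:
  assumes b: "2 \<le> b" and u: "u \<in> Lam a b" and u0: "\<And>j. u (0, j) = 0"
    and rel: "\<And>m n. Suc m < a \<Longrightarrow> Suc n < b \<Longrightarrow> of_nat m * u (Suc m, n) + of_nat n * v (m, Suc n) = 0"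
  shows "u = (\<lambda>p. u (1, 0) * Xel p + lbr a b (ham_potential a b u v) Xel p)"
proof
  fix p :: "nat \<times> nat"
  obtain m n where p: "p = (m, n)" by (cases p)
  show "u p = u (1, 0) * Xel p + lbr a b (ham_potential a b u v) Xel p"
  proof (cases "m < a \<and> n < b")
    case False
    then show ?thesis using u unfolding p lbr_Xel by (auto simp: Lam_def Xel_def)
  next
    case inside: True
    consider "m = 0" | m' where "m = Suc m'" "n = 0" | m' n' where "m = Suc m'" "n = Suc n'"
      by (cases m; cases n) auto
    then show ?thesis
    proof cases
      case 1
      then show ?thesis unfolding p lbr_Xel by (simp add: u0 Xel_def)
    next
      case (2 m')
      have "of_nat m' * u (Suc m', 0) = 0" using rel[of m' 0] inside b 2 by simp
      then have "m' = 0 \<or> u (m, 0) = 0" using 2 by simp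
      then show ?thesis using 2 inside unfolding p lbr_Xel by (auto simp: Xel_def)
    next
      case (3 m' n')
      then have "m \<noteq> 0" and "(of_nat n :: complex) \<noteq> 0" by (simp_all del: of_nat_Suc)
      moreover have "ham_potential a b u v (m - 1, n) = - u (m, n) / of_nat n"
        using inside 3 by (simp add: ham_potential_def)
      ultimately show ?thesis using inside unfolding p lbr_Xel by (simp add: Xel_def)
    qed
  qed
qed

lemma ham_potential_Yel:
  assumes a: "2 \<le> a" and v: "v \<in> Lam a b" and v0: "\<And>i. v (i, 0) = 0"
    and rel: "\<And>m n. Suc m < a \<Longrightarrow> Suc n < b \<Longrightarrow> of_nat m * u (Suc m, n) + of_nat n * v (m, Suc n) = 0"
  shows "v = (\<lambda>p. v (0, 1) * Yel p + lbr a b (ham_potential a b u v) Yel p)"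
proof
  fix p :: "nat \<times> nat"
  obtain m n where p: "p = (m, n)" by (cases p)
  show "v p = v (0, 1) * Yel p + lbr a b (ham_potential a b u v) Yel p"
  proof (cases "m < a \<and> n < b")
    case False
    then show ?thesis using v unfolding p lbr_Yel by (auto simp: Lam_def Yel_def)
  next
    case inside: True
    consider "n = 0" | n' where "n = Suc n'" "m = 0" | m' n' where "m = Suc m'" "n = Suc n'"
      by (cases m; cases n) auto
    then show ?thesis
    proof cases
      case 1
      then show ?thesis unfolding p lbr_Yel by (simp add: v0 Yel_def)
    next
      case (2 n')
      have "of_nat n' * v (0, Suc n') = 0" using rel[of 0 n'] inside a 2 by simp
      then have "n' = 0 \<or> v (0, n) = 0" using 2 by simp
      then show ?thesis using 2 inside unfolding p lbr_Yel by (auto simp: Yel_def)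
    next
      case (3 m' n')
      have "of_nat m * ham_potential a b u v (m, n') = v (m, n)"
      proof (cases "1 \<le> n' \<and> m + 1 < a")
        case True
        have "of_nat m * u (Suc m, n') + of_nat n' * v (m, n) = 0"
          using rel[of m n'] True inside 3 by simp
        then have v_rel: "- (of_nat m * u (Suc m, n')) = v (m, n) * of_nat n'"
          by (simp add: add_eq_0_iff2 mult.commute)
        have "of_nat m * ham_potential a b u v (m, n') = - (of_nat m * u (Suc m, n')) / of_nat n'"
          using True inside 3 by (simp add: ham_potential_def)
        also have "\<dots> = v (m, n)"
          unfolding v_rel using True by simp
        finally show ?thesis .
      next
        case False
        have "(of_nat m :: complex) \<noteq> 0" using 3 by (simp del: of_nat_Suc)
        with False show ?thesis using inside 3 by (auto simp: ham_potential_def)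
      qed
      then show ?thesis using inside 3 unfolding p lbr_Yel by (simp add: Yel_def)
    qed
  qed
qed


section \<open>Classification of Poisson derivations\<close>

lemma lmult_combination_left: "lmult a b (\<lambda>p. c1 * f1 p + c2 * f2 p + f3 p) g
   = (\<lambda>p. c1 * lmult a b f1 g p + c2 * lmult a b f2 g p + lmult a b f3 g p)"
  by (simp add: lmult_trunc lift_add lift_scale distrib_right trunc_add trunc_scale mult.assoc)

lemma lmult_combination_right: "lmult a b g (\<lambda>p. c1 * f1 p + c2 * f2 p + f3 p)
   = (\<lambda>p. c1 * lmult a b g f1 p + c2 * lmult a b g f2 p + lmult a b g f3 p)"
  using lmult_combination_left[of a b c1 f1 c2 f2 f3 g] lmult_comm by simp

lemma derivation_combination:
  assumes "is_derivation a b D1" "is_derivation a b D2" "is_derivation a b D3"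
  shows "is_derivation a b (\<lambda>f p. c1 * D1 f p + c2 * D2 f p + D3 f p)"
    (is "is_derivation a b ?G")
  unfolding is_derivation_def
proof (intro conjI ballI)
  show "is_linear_map a b ?G"
    using assms unfolding is_derivation_def is_linear_map_def
    by (auto simp: Lam_def fun_eq_iff algebra_simps)
next
  fix f g assume "f \<in> Lam a b" "g \<in> Lam a b"
  with assms show "?G (lmult a b f g) = (\<lambda>p. lmult a b (?G f) g p + lmult a b f (?G g) p)"
    unfolding lmult_combination_left lmult_combination_right is_derivation_def
    by (simp add: fun_eq_iff algebra_simps)
qed

lemma poisson_derivation_decomposition:
  assumes ab: "2 \<le> a" "2 \<le> b" and D: "is_poisson_derivation a b D"
  shows "\<exists>c1 c2::complex. \<exists>l\<in>Lam a b. \<forall>f\<in>Lam a b.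
           D f = (\<lambda>p. c1 * d10 f p + c2 * d01 f p + lbr a b l f p)"
proof -
  have Dd: "is_derivation a b D" using D unfolding is_poisson_derivation_def by blast
  define u v where "u = D Xel" and "v = D Yel"
  have uL: "u \<in> Lam a b" and vL: "v \<in> Lam a b"
    using Dd ab Xel_Lam Yel_Lam unfolding u_def v_def is_derivation_def is_linear_map_def by auto
  have u0: "u (0, j) = 0" for j
    unfolding u_def using derivation_Xel_no_pure_Y[OF ab(1) _ Dd] ab(2) by simp
  have v0: "v (i, 0) = 0" for i
    unfolding v_def using derivation_Yel_no_pure_X[OF _ ab(2) Dd] ab(1) by simp
  have rel: "\<And>m n. Suc m < a \<Longrightarrow> Suc n < b \<Longrightarrow> of_nat m * u (Suc m, n) + of_nat n * v (m, Suc n) = 0"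
    unfolding u_def v_def using ab D by (rule poisson_relation)
  note X = ham_potential_Xel[OF ab(2) uL u0 rel] and Y = ham_potential_Yel[OF ab(1) vL v0 rel]
  define G where "G = (\<lambda>f p. u (1, 0) * d10 f p + v (0, 1) * d01 f p + lbr a b (ham_potential a b u v) f p)"
  have Gd: "is_derivation a b G"
    unfolding G_def using d10_poisson d01_poisson hamiltonian_poisson
    by (intro derivation_combination) (simp_all add: is_poisson_derivation_def)
  have "G Xel = (\<lambda>p. u (1, 0) * Xel p + lbr a b (ham_potential a b u v) Xel p)"
    unfolding G_def d10_Xel d01_Xel by simp
  also have "\<dots> = D Xel" unfolding u_def[symmetric] by (rule X[symmetric])
  finally have GX: "G Xel = D Xel" .
  have "G Yel = (\<lambda>p. v (0, 1) * Yel p + lbr a b (ham_potential a b u v) Yel p)"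
    unfolding G_def d10_Yel d01_Yel by simp
  also have "\<dots> = D Yel" unfolding v_def[symmetric] by (rule Y[symmetric])
  finally have GY: "G Yel = D Yel" .
  have "\<forall>f\<in>Lam a b. D f = G f"
    using derivations_eq[OF ab Dd Gd GX[symmetric] GY[symmetric]] by blast
  then show ?thesis unfolding G_def using ham_potential_Lam by blast
qed

text \<open>d10 and d01 are independent modulo Hamiltonians: {l,X} has no X-term and {l,Y} no Y-term.\<close>
lemma d10_d01_independent:
  assumes ab: "2 \<le> a" "2 \<le> b"
    and ham: "\<forall>f\<in>Lam a b. (\<lambda>p. c1 * d10 f p + c2 * d01 f p) = lbr a b l f"
  shows "c1 = 0 \<and> c2 = 0"
proof
  have "c1 * d10 Xel (1, 0) + c2 * d01 Xel (1, 0) = lbr a b l Xel (1, 0)"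
    using fun_cong[OF bspec[OF ham Xel_Lam], of "(1, 0)"] ab by simp
  then show "c1 = 0" using ab unfolding d10_Xel d01_Xel lbr_Xel by (simp add: Xel_def)
  have "c1 * d10 Yel (0, 1) + c2 * d01 Yel (0, 1) = lbr a b l Yel (0, 1)"
    using fun_cong[OF bspec[OF ham Yel_Lam], of "(0, 1)"] ab by simp
  then show "c2 = 0" using ab unfolding d10_Yel d01_Yel lbr_Yel by (simp add: Yel_def)
qed


theorem mainTheorem3:
  fixes a b :: nat
  assumes "a \<ge> 2" and "b \<ge> 2"
  shows "is_poisson_derivation a b d10 \<and> d10 Xel = Xel \<and> d10 Yel = (\<lambda>_. 0)
       \<and> is_poisson_derivation a b d01 \<and> d01 Xel = (\<lambda>_. 0) \<and> d01 Yel = Yel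
       \<and> (\<forall>l\<in>Lam a b. is_poisson_derivation a b (lbr a b l))
       \<and> (\<forall>D. is_poisson_derivation a b D \<longrightarrow>
            (\<exists>c1 c2::complex. \<exists>l\<in>Lam a b. \<forall>f\<in>Lam a b.
               D f = (\<lambda>p. c1 * d10 f p + c2 * d01 f p + lbr a b l f p)))
       \<and> (\<forall>c1 c2::complex. \<forall>l\<in>Lam a b.
            (\<forall>f\<in>Lam a b. (\<lambda>p. c1 * d10 f p + c2 * d01 f p) = lbr a b l f)
            \<longrightarrow> c1 = 0 \<and> c2 = 0)"
proof (intro conjI ballI allI impI)
  show "is_poisson_derivation a b d10" "is_poisson_derivation a b d01"
    and "is_poisson_derivation a b (lbr a b l)" for l
    by (rule d10_poisson d01_poisson hamiltonian_poisson)+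
  show "d10 Xel = Xel" "d10 Yel = (\<lambda>_. 0)" "d01 Xel = (\<lambda>_. 0)" "d01 Yel = Yel"
    by (rule d10_Xel d10_Yel d01_Xel d01_Yel)+
next
  fix D assume "is_poisson_derivation a b D"
  then show "\<exists>c1 c2::complex. \<exists>l\<in>Lam a b. \<forall>f\<in>Lam a b.
               D f = (\<lambda>p. c1 * d10 f p + c2 * d01 f p + lbr a b l f p)"
    by (rule poisson_derivation_decomposition[OF assms])
next
  fix c1 c2 :: complex and l
  assume "\<forall>f\<in>Lam a b. (\<lambda>p. c1 * d10 f p + c2 * d01 f p) = lbr a b l f"
  then show "c1 = 0" "c2 = 0" using d10_d01_independent[OF assms] by blast+
qed

end
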